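(* Let $L$ be a co-Heyting algebra, $a\in L$ and $d$ a positive integer. Then $\dim_L a\geq d$ if and only if there exist $x_0,\dots,x_d\in L$ with $0\neq x_d\ll x_{d-1}\ll\cdots\ll x_0\leq a$; and $\operatorname{codim}_L a\geq d$ if and only if there exist $x_0,\dots,x_d\in L$ with $a\leq x_d\ll x_{d-1}\ll\cdots\ll x_0$. In particular, there is a single positive existential first-order formula in the language $\{0,1,\vee,\wedge,-\}$ which defines the set $dL=\{a\in L:\operatorname{codim}_L a\ge d\}$ in every co-Heyting algebra $L$.
   Context: A co-Heyting algebra is a bounded distributive lattice $(L,0,1,\vee,\wedge)$ such that for all $a,b$ the element $a-b=\min\{c\in L: a\le b\vee c\}$ exists; it is regarded as a structure in the language $\{0,1,\vee,\wedge,-\}$. The strong order: $b\ll a$ iff $b\le a$ and $a-b=a$. Foundation rank in an ordered set: $\operatorname{rk}x\ge0$; $\operatorname{rk}x\ge\beta+1$ iff some $y<x$ has $\operatorname{rk}y\ge\beta$; at limits, $\operatorname{rk}x\ge\lambda$ iff $\operatorname{rk}x\ge\beta$ for all $\beta<\lambda$; cofoundation rank is foundation rank for the reverse order. $\operatorname{Spec}L$ is the set of prime filters ordered by inclusion; height/coheight of $\mathfrak p$ are its foundation/cofoundation ranks in $\operatorname{Spec}L$. $\dim_L a=\sup\{\operatorname{coheight}\mathfrak p: a\in\mathfrak p\in\operatorname{Spec}L\}$ and $\operatorname{codim}_L a=\min\{\operatorname{height}\mathfrak p: a\in\mathfrak p\in\operatorname{Spec}L\}$, with $\sup\emptyset=-\infty$,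 $\min\emptyset=+\infty$. *)

theory Defs
  imports Main "HOL-Library.Extended_Nat"
begin

definition coHeyting :: "'a::{bounded_lattice,distrib_lattice} itself \<Rightarrow> bool" where
  "coHeyting _ \<longleftrightarrow> (\<forall>a b::'a. \<exists>c. a \<le> sup b c \<and> (\<forall>c'. a \<le> sup b c' \<longrightarrow> c \<le> c'))"

definition cdiff :: "'a::{bounded_lattice,distrib_lattice} \<Rightarrow> 'a \<Rightarrow> 'a" where
  "cdiff a b = (LEAST c. a \<le> sup b c)"

definition strong_le :: "'a::{bounded_lattice,distrib_lattice} \<Rightarrow> 'a \<Rightarrow> bool" where
  "strong_le b a \<longleftrightarrow> b \<le> a \<and> cdiff a b = a"

definition prime_filter :: "'a::{bounded_lattice,distrib_lattice} set \<Rightarrow> bool" where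
  "prime_filter F \<longleftrightarrow> top \<in> F \<and> bot \<notin> F
     \<and> (\<forall>x y. x \<in> F \<longrightarrow> x \<le> y \<longrightarrow> y \<in> F)
     \<and> (\<forall>x y. x \<in> F \<longrightarrow> y \<in> F \<longrightarrow> inf x y \<in> F)
     \<and> (\<forall>x y. sup x y \<in> F \<longrightarrow> x \<in> F \<or> y \<in> F)"

definition Spec :: "'a::{bounded_lattice,distrib_lattice} set set" where
  "Spec = {F. prime_filter F}"

fun rank_ge :: "'b set \<Rightarrow> ('b \<Rightarrow> 'b \<Rightarrow> bool) \<Rightarrow> 'b \<Rightarrow> nat \<Rightarrow> bool" where
  "rank_ge S lt x 0 = True"
| "rank_ge S lt x (Suc n) = (\<exists>y\<in>S. lt y x \<and> rank_ge S lt y n)"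

text \<open>The rank as an extended natural: ordinal ranks \<ge> \<omega> (including ill-founded
  elements) are collapsed to \<infinity>; this is exact for comparisons with finite numbers.\<close>
definition rank :: "'b set \<Rightarrow> ('b \<Rightarrow> 'b \<Rightarrow> bool) \<Rightarrow> 'b \<Rightarrow> enat" where
  "rank S lt x = Sup {enat n | n. rank_ge S lt x n}"

definition height :: "'a::{bounded_lattice,distrib_lattice} set \<Rightarrow> enat" where
  "height p = rank Spec (\<lambda>q r. q \<subset> r) p"

definition coheight :: "'a::{bounded_lattice,distrib_lattice} set \<Rightarrow> enat" where
  "coheight p = rank Spec (\<lambda>q r. r \<subset> q) p"

text \<open>dim a = sup of coheights of prime filters containing a (sup of the empty set is 0
  here instead of -\<infinity>; irrelevant for comparisons with positive d).\<close>
definition dimL :: "'a::{bounded_lattice,distrib_lattice} \<Rightarrow> enat" where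
  "dimL a = (SUP p\<in>{p\<in>Spec. a \<in> p}. coheight p)"

definition codimL :: "'a::{bounded_lattice,distrib_lattice} \<Rightarrow> enat" where
  "codimL a = (INF p\<in>{p\<in>Spec. a \<in> p}. height p)"

end

theory Submission
  imports Defs
begin

text \<open>A strong step \<open>y \<ll> x\<close> with \<open>y\<close> in a prime filter \<open>p\<close> can always be matched by a
  prime filter \<open>q \<subset> p\<close> containing \<open>x\<close> but not \<open>y\<close>: separate the filter above \<open>x\<close> from
  the ideal generated by \<open>y\<close> and the complement of \<open>p\<close>, which are disjoint precisely because
  \<open>y \<ll> x\<close>. Hence a strong chain of length \<open>d\<close> yields a chain of \<open>d + 1\<close> prime filters,
  bounding height and coheight from below. Conversely, a chain of prime filters is turned into a
  strong chain one step at a time: if \<open>b\<close> lies in the larger but not in the smaller filter, then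
  \<open>(z - b) \<sqinter> b \<ll> z - b\<close>. For the codimension, the elements lying below the end of some
  strong chain of length \<open>d\<close> form an ideal, so an element outside it would lie in a prime filter
  avoiding that ideal, whose height would nevertheless be at least \<open>d\<close>.\<close>

definition lattice_filter :: "'a::bounded_lattice set \<Rightarrow> bool" where
  "lattice_filter F \<longleftrightarrow> top \<in> F \<and> (\<forall>x y. x \<in> F \<longrightarrow> x \<le> y \<longrightarrow> y \<in> F)
     \<and> (\<forall>x y. x \<in> F \<longrightarrow> y \<in> F \<longrightarrow> inf x y \<in> F)"

definition lattice_ideal :: "'a::bounded_lattice set \<Rightarrow> bool" where
  "lattice_ideal I \<longleftrightarrow> bot \<in> I \<and> (\<forall>x y. y \<in> I \<longrightarrow> x \<le> y \<longrightarrow> x \<in> I)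
     \<and> (\<forall>x y. x \<in> I \<longrightarrow> y \<in> I \<longrightarrow> sup x y \<in> I)"

lemma lattice_filterD:
  assumes "lattice_filter F"
  shows "top \<in> F" and "x \<in> F \<Longrightarrow> x \<le> y \<Longrightarrow> y \<in> F" and "x \<in> F \<Longrightarrow> y \<in> F \<Longrightarrow> inf x y \<in> F"
  using assms unfolding lattice_filter_def by blast+

lemma lattice_idealD:
  assumes "lattice_ideal I"
  shows "bot \<in> I" and "y \<in> I \<Longrightarrow> x \<le> y \<Longrightarrow> x \<in> I" and "x \<in> I \<Longrightarrow> y \<in> I \<Longrightarrow> sup x y \<in> I"
  using assms unfolding lattice_ideal_def by blast+

lemma prime_filter_iff:
  "prime_filter p \<longleftrightarrow> lattice_filter p \<and> bot \<notin> p \<and> (\<forall>x y. sup x y \<in> p \<longrightarrow> x \<in> p \<or> y \<in> p)"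
  unfolding prime_filter_def lattice_filter_def by blast

lemma lattice_filter_principal: "lattice_filter {z. a \<le> z}"
  unfolding lattice_filter_def by (auto intro: order_trans)

lemma lattice_ideal_principal: "lattice_ideal {z. z \<le> a}"
  unfolding lattice_ideal_def by (auto intro: order_trans)

lemma lattice_filter_Union_chain:
  assumes "C \<noteq> {}" and filters: "\<And>F. F \<in> C \<Longrightarrow> lattice_filter F"
    and chain: "\<And>F G. F \<in> C \<Longrightarrow> G \<in> C \<Longrightarrow> F \<subseteq> G \<or> G \<subseteq> F"
  shows "lattice_filter (\<Union>C)"
  unfolding lattice_filter_def
proof (intro conjI allI impI)
  obtain F where "F \<in> C" using assms(1) by blast
  then show "top \<in> \<Union>C" using filters unfolding lattice_filter_def by blast
  show "y \<in> \<Union>C" if xy: "x \<in> \<Union>C" "x \<le> y" for x y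
  proof -
    obtain F where "F \<in> C" "x \<in> F" using xy(1) by blast
    with filters[of F] xy(2) show ?thesis unfolding lattice_filter_def by blast
  qed
  show "inf x y \<in> \<Union>C" if xy: "x \<in> \<Union>C" "y \<in> \<Union>C" for x y
  proof -
    obtain F G where FG: "F \<in> C" "G \<in> C" "x \<in> F" "y \<in> G" using xy by blast
    then have "x \<in> F \<union> G" "y \<in> F \<union> G" "F \<union> G \<in> C"
      using chain[OF FG(1,2)] by (auto simp: sup_absorb1 sup_absorb2)
    with filters[of "F \<union> G"] show ?thesis unfolding lattice_filter_def by blast
  qed
qed

lemma lattice_filter_adjoin:
  assumes "lattice_filter F"
  shows "lattice_filter {z. \<exists>m\<in>F. inf m x \<le> z}"
  unfolding lattice_filter_def
proof (intro conjI allI impI)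
  show "top \<in> {z. \<exists>m\<in>F. inf m x \<le> z}" using assms unfolding lattice_filter_def by auto
  show "v \<in> {z. \<exists>m\<in>F. inf m x \<le> z}" if "u \<in> {z. \<exists>m\<in>F. inf m x \<le> z}" "u \<le> v" for u v
    using that by (auto intro: order_trans)
  show "inf u v \<in> {z. \<exists>m\<in>F. inf m x \<le> z}"
    if uv: "u \<in> {z. \<exists>m\<in>F. inf m x \<le> z}" "v \<in> {z. \<exists>m\<in>F. inf m x \<le> z}" for u v
  proof -
    obtain m m' where m: "m \<in> F" "m' \<in> F" "inf m x \<le> u" "inf m' x \<le> v" using uv by blast
    have "inf (inf m m') x \<le> u" using m(3) by (rule order_trans[rotated]) (intro inf_mono; simp)
    moreover have "inf (inf m m') x \<le> v" using m(4) by (rule order_trans[rotated]) (intro inf_mono; simp)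
    moreover have "inf m m' \<in> F" using m(1,2) assms unfolding lattice_filter_def by blast
    ultimately show ?thesis by (auto intro: le_infI)
  qed
qed

text \<open>Distributivity enters only in the primeness of a maximal filter.\<close>

lemma prime_filter_separation:
  fixes F I :: "'a::{bounded_lattice,distrib_lattice} set"
  assumes "lattice_filter F" and I: "lattice_ideal I" and "F \<inter> I = {}"
  obtains p where "prime_filter p" "F \<subseteq> p" "p \<inter> I = {}"
proof -
  define \<A> where "\<A> = {G. lattice_filter G \<and> F \<subseteq> G \<and> G \<inter> I = {}}"
  have "\<exists>M\<in>\<A>. \<forall>G\<in>\<A>. M \<subseteq> G \<longrightarrow> G = M"
  proof (rule subset_Zorn_nonempty)
    show "\<A> \<noteq> {}" using assms unfolding \<A>_def by blast
    show "\<Union>C \<in> \<A>" if "C \<noteq> {}" and chain: "subset.chain \<A> C" for C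
    proof -
      have sub: "C \<subseteq> \<A>" and ch: "\<And>G H. G \<in> C \<Longrightarrow> H \<in> C \<Longrightarrow> G \<subseteq> H \<or> H \<subseteq> G"
        using chain unfolding subset_chain_def by blast+
      have "lattice_filter (\<Union>C)"
        using \<open>C \<noteq> {}\<close> _ ch by (rule lattice_filter_Union_chain) (use sub in \<open>auto simp: \<A>_def\<close>)
      moreover have "F \<subseteq> \<Union>C" "\<Union>C \<inter> I = {}"
        using sub \<open>C \<noteq> {}\<close> by (auto simp: \<A>_def)
      ultimately show ?thesis by (simp add: \<A>_def)
    qed
  qed
  then obtain M where "M \<in> \<A>" and maximal: "\<And>G. G \<in> \<A> \<Longrightarrow> M \<subseteq> G \<Longrightarrow> G = M"
    by blast
  then have M: "lattice_filter M" "F \<subseteq> M" "M \<inter> I = {}" by (simp_all add: \<A>_def)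
  have meets_I: "\<exists>m\<in>M. \<exists>i\<in>I. inf m x \<le> i" if "x \<notin> M" for x
  proof (rule ccontr)
    assume avoids_I: "\<not> (\<exists>m\<in>M. \<exists>i\<in>I. inf m x \<le> i)"
    let ?G = "{z. \<exists>m\<in>M. inf m x \<le> z}"
    have "?G \<inter> I = {}" using avoids_I by blast
    moreover have "M \<subseteq> ?G" by (auto intro: le_infI1)
    ultimately have "?G \<in> \<A>" using M(2) lattice_filter_adjoin[OF M(1)] by (auto simp: \<A>_def)
    moreover have "x \<in> ?G" using lattice_filterD(1)[OF M(1)] by auto
    ultimately show False using maximal \<open>M \<subseteq> ?G\<close> that by blast
  qed
  have "x \<in> M \<or> y \<in> M" if "sup x y \<in> M" for x y
  proof (rule ccontr)
    assume "\<not> (x \<in> M \<or> y \<in> M)"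
    then obtain m i m' i' where mi: "m \<in> M" "i \<in> I" "inf m x \<le> i" "m' \<in> M" "i' \<in> I" "inf m' y \<le> i'"
      using meets_I by meson
    let ?z = "inf (inf m m') (sup x y)"
    have "?z = sup (inf (inf m m') x) (inf (inf m m') y)" by (rule inf_sup_distrib1)
    also have "\<dots> \<le> sup i i'"
    proof (rule sup_mono)
      show "inf (inf m m') x \<le> i" using mi(3) by (rule order_trans[rotated]) (intro inf_mono; simp)
      show "inf (inf m m') y \<le> i'" using mi(6) by (rule order_trans[rotated]) (intro inf_mono; simp)
    qed
    finally have "?z \<in> I" using lattice_idealD(2,3)[OF I] mi(2,5) by blast
    moreover have "?z \<in> M" using lattice_filterD(3)[OF M(1)] mi(1,4) that by blast
    ultimately show False using M(3) by blast
  qed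
  moreover have "bot \<notin> M" using M(3) lattice_idealD(1)[OF I] by blast
  ultimately have "prime_filter M" using M(1) unfolding prime_filter_iff by blast
  then show thesis using M(2,3) by (rule that)
qed

lemma prime_filter_containing:
  fixes x :: "'a::{bounded_lattice,distrib_lattice}"
  assumes "x \<noteq> bot"
  obtains p where "prime_filter p" "x \<in> p"
proof -
  have "{z. x \<le> z} \<inter> {z. z \<le> bot} = {}" using assms bot_unique order_trans by blast
  then show thesis
    by (rule prime_filter_separation[OF lattice_filter_principal lattice_ideal_principal])
      (auto intro: that)
qed

lemma rank_ge_mono: "rank_ge S lt x n \<Longrightarrow> m \<le> n \<Longrightarrow> rank_ge S lt x m"
proof (induction m arbitrary: n x)
  case (Suc m)
  then obtain n' where "n = Suc n'" "m \<le> n'" by (cases n) auto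
  with Suc show ?case by auto
qed simp

lemma enat_le_rank_iff: "enat n \<le> rank S lt x \<longleftrightarrow> rank_ge S lt x n"
proof
  show "rank_ge S lt x n \<Longrightarrow> enat n \<le> rank S lt x"
    unfolding rank_def by (rule Sup_upper) blast
  show "enat n \<le> rank S lt x \<Longrightarrow> rank_ge S lt x n"
  proof (cases n)
    case (Suc m)
    assume "enat n \<le> rank S lt x"
    then obtain k where "rank_ge S lt x k" "m < k"
      unfolding Suc Suc_ile_eq rank_def less_Sup_iff by auto
    then show ?thesis using rank_ge_mono Suc by (metis Suc_leI)
  qed simp
qed

abbreviation height_ge :: "'a::{bounded_lattice,distrib_lattice} set \<Rightarrow> nat \<Rightarrow> bool" where
  "height_ge p n \<equiv> rank_ge Spec (\<lambda>q r. q \<subset> r) p n"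

abbreviation coheight_ge :: "'a::{bounded_lattice,distrib_lattice} set \<Rightarrow> nat \<Rightarrow> bool" where
  "coheight_ge p n \<equiv> rank_ge Spec (\<lambda>q r. r \<subset> q) p n"

text \<open>The hypothesis \<open>d > 0\<close> is needed because \<open>dimL\<close> of an element in no prime filter is \<open>0\<close>.\<close>

lemma enat_le_dimL_iff:
  assumes "d > 0"
  shows "enat d \<le> dimL a \<longleftrightarrow> (\<exists>p. prime_filter p \<and> a \<in> p \<and> coheight_ge p d)"
proof -
  obtain m where "d = Suc m" using assms gr0_implies_Suc by blast
  then show ?thesis
    unfolding dimL_def coheight_def Spec_def
    by (auto simp: Suc_ile_eq less_SUP_iff enat_le_rank_iff[symmetric])
qed

lemma enat_le_codimL_iff:
  "enat d \<le> codimL a \<longleftrightarrow> (\<forall>p. prime_filter p \<longrightarrow> a \<in> p \<longrightarrow> height_ge p d)"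
  unfolding codimL_def height_def le_INF_iff enat_le_rank_iff Spec_def by blast

definition strong_chain :: "nat \<Rightarrow> (nat \<Rightarrow> 'a::{bounded_lattice,distrib_lattice}) \<Rightarrow> bool" where
  "strong_chain n x \<longleftrightarrow> (\<forall>i<n. strong_le (x (Suc i)) (x i))"

lemma strong_chain_Suc_iff_shift:
  "strong_chain (Suc n) x \<longleftrightarrow> strong_le (x 1) (x 0) \<and> strong_chain n (\<lambda>i. x (Suc i))"
  unfolding strong_chain_def using less_Suc_eq_0_disj by auto

lemma strong_chain_Suc_iff_last:
  "strong_chain (Suc n) x \<longleftrightarrow> strong_chain n x \<and> strong_le (x (Suc n)) (x n)"
  unfolding strong_chain_def using less_Suc_eq by auto

lemma strong_chain_cong: "(\<And>i. i \<le> n \<Longrightarrow> x i = y i) \<Longrightarrow> strong_chain n x \<longleftrightarrow> strong_chain n y"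
  unfolding strong_chain_def by simp

context
  assumes coHeyting: "coHeyting TYPE('a::{bounded_lattice,distrib_lattice})"
begin

lemma cdiff_le_iff: "cdiff (a::'a) b \<le> c \<longleftrightarrow> a \<le> sup b c"
proof -
  obtain c0 :: 'a where c0: "a \<le> sup b c0" "\<And>c. a \<le> sup b c \<Longrightarrow> c0 \<le> c"
    using coHeyting unfolding coHeyting_def by blast
  have "cdiff a b = c0" unfolding cdiff_def by (rule Least_equality) (use c0 in auto)
  moreover have "a \<le> sup b c" if "c0 \<le> c"
    using c0(1) by (rule order.trans) (rule sup_mono[OF order_refl that])
  ultimately show ?thesis using c0(2) by blast
qed

lemma le_sup_cdiff: "(a::'a) \<le> sup b (cdiff a b)"
  using cdiff_le_iff[of a b "cdiff a b"] by simp

lemma cdiff_le: "cdiff (a::'a) b \<le> a"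
  by (simp add: cdiff_le_iff)

lemma cdiff_cdiff_same: "cdiff (cdiff (a::'a) b) b = cdiff a b"
proof (rule antisym)
  have "a \<le> sup b (cdiff a b)" by (rule le_sup_cdiff)
  also have "\<dots> \<le> sup b (cdiff (cdiff a b) b)" by (simp add: le_sup_cdiff)
  finally show "cdiff a b \<le> cdiff (cdiff a b) b" by (simp add: cdiff_le_iff)
qed (rule cdiff_le)

lemma strong_le_iff: "strong_le (b::'a) a \<longleftrightarrow> b \<le> a \<and> (\<forall>c. a \<le> sup b c \<longrightarrow> a \<le> c)"
proof -
  have "cdiff a b = a \<longleftrightarrow> a \<le> cdiff a b" by (metis antisym cdiff_le)
  also have "\<dots> \<longleftrightarrow> (\<forall>c. a \<le> sup b c \<longrightarrow> a \<le> c)"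
  proof (intro iffI allI impI)
    fix c assume "a \<le> cdiff a b" "a \<le> sup b c"
    from \<open>a \<le> sup b c\<close> have "cdiff a b \<le> c" by (simp add: cdiff_le_iff)
    with \<open>a \<le> cdiff a b\<close> show "a \<le> c" by (rule order.trans)
  next
    assume "\<forall>c. a \<le> sup b c \<longrightarrow> a \<le> c"
    then show "a \<le> cdiff a b" using le_sup_cdiff by blast
  qed
  finally show ?thesis unfolding strong_le_def by blast
qed

lemma le_strong_le_trans:
  assumes "(c::'a) \<le> b" and "strong_le b a"
  shows "strong_le c a"
  unfolding strong_le_iff
proof (intro conjI allI impI)
  have ba: "b \<le> a" "\<And>e. a \<le> sup b e \<Longrightarrow> a \<le> e"
    using assms(2) unfolding strong_le_iff by blast+
  show "c \<le> a" using assms(1) ba(1) by (rule order_trans)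
  fix e assume "a \<le> sup c e"
  also have "\<dots> \<le> sup b e" using assms(1) by (rule sup_mono) simp
  finally show "a \<le> e" by (rule ba(2))
qed

lemma strong_le_inf_cdiff:
  assumes "cdiff (a::'a) b = a"
  shows "strong_le (inf a b) a"
  unfolding strong_le_iff
proof (intro conjI allI impI)
  fix c assume "a \<le> sup (inf a b) c"
  also have "\<dots> \<le> sup b c" by (simp add: le_supI1)
  finally have "cdiff a b \<le> c" using cdiff_le_iff by blast
  then show "a \<le> c" using assms by simp
qed simp

lemma strong_le_sup:
  assumes "strong_le (b::'a) a" and "strong_le b' a'"
  shows "strong_le (sup b b') (sup a a')"
  unfolding strong_le_iff
proof (intro conjI allI impI)
  have ba: "b \<le> a" "\<And>c. a \<le> sup b c \<Longrightarrow> a \<le> c"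
    and ba': "b' \<le> a'" "\<And>c. a' \<le> sup b' c \<Longrightarrow> a' \<le> c"
    using assms unfolding strong_le_iff by blast+
  show "sup b b' \<le> sup a a'" using ba(1) ba'(1) by (rule sup_mono)
  fix c assume "sup a a' \<le> sup (sup b b') c"
  then have a: "a \<le> sup b (sup b' c)" and a': "a' \<le> sup b' (sup b c)"
    by (simp_all add: sup_assoc sup_left_commute)
  have "a' \<le> sup b c" using a' by (rule ba'(2))
  with ba'(1) have "b' \<le> sup b c" by (rule order.trans)
  then have "sup b' c \<le> sup b c" by simp
  have "a \<le> sup b (sup b' c)" by (rule a)
  also have "\<dots> \<le> sup b (sup b c)" using \<open>sup b' c \<le> sup b c\<close> by (rule sup_mono[OF order_refl])
  finally have "a \<le> sup b c" by simp
  then have "a \<le> c" by (rule ba(2))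
  with ba(1) have "b \<le> c" by (rule order.trans)
  then have "sup b c = c" by (rule sup_absorb2)
  with \<open>a' \<le> sup b c\<close> have "a' \<le> c" by simp
  with \<open>a \<le> c\<close> show "sup a a' \<le> c" by simp
qed

lemma cdiff_mem_prime_filter: "prime_filter p \<Longrightarrow> (x::'a) \<in> p \<Longrightarrow> b \<notin> p \<Longrightarrow> cdiff x b \<in> p"
  unfolding prime_filter_def using le_sup_cdiff by blast

lemma lattice_ideal_strong_chain_ends: "lattice_ideal {c::'a. \<exists>x. strong_chain n x \<and> c \<le> x n}"
  unfolding lattice_ideal_def
proof (intro conjI allI impI)
  have "strong_le (bot::'a) bot" unfolding strong_le_def using cdiff_le[of bot bot] by (simp add: bot_unique)
  then show "bot \<in> {c::'a. \<exists>x. strong_chain n x \<and> c \<le> x n}"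
    unfolding strong_chain_def by (auto intro: exI[of _ "\<lambda>_. bot"])
  show "u \<in> {c::'a. \<exists>x. strong_chain n x \<and> c \<le> x n}"
    if "v \<in> {c. \<exists>x. strong_chain n x \<and> c \<le> x n}" "u \<le> v" for u v
    using that order.trans by blast
  show "sup u v \<in> {c::'a. \<exists>x. strong_chain n x \<and> c \<le> x n}"
    if "u \<in> {c. \<exists>x. strong_chain n x \<and> c \<le> x n}" "v \<in> {c. \<exists>x. strong_chain n x \<and> c \<le> x n}" for u v
  proof -
    from that obtain x y where "strong_chain n x" "u \<le> x n" "strong_chain n y" "v \<le> y n" by blast
    then have "strong_chain n (\<lambda>i. sup (x i) (y i))" "sup u v \<le> sup (x n) (y n)"
      unfolding strong_chain_def by (auto intro: strong_le_sup le_supI1 le_supI2)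
    then show ?thesis by blast
  qed
qed

lemma prime_filter_below_strong_le:
  assumes p: "prime_filter p" and "(y::'a) \<in> p" and "strong_le y x"
  obtains q where "prime_filter q" "q \<subset> p" "x \<in> q" "y \<notin> q"
proof -
  have x: "y \<le> x" "\<And>c. x \<le> sup y c \<Longrightarrow> x \<le> c" using assms(3) unfolding strong_le_iff by blast+
  have up: "\<And>u v. u \<in> p \<Longrightarrow> u \<le> v \<Longrightarrow> v \<in> p" and bot: "bot \<notin> p"
    and prime: "\<And>u v. sup u v \<in> p \<Longrightarrow> u \<in> p \<or> v \<in> p"
    using p unfolding prime_filter_def by blast+
  define I where "I = {z. \<exists>w. w \<notin> p \<and> z \<le> sup w y}"
  have "lattice_ideal I"
    unfolding lattice_ideal_def
  proof (intro conjI allI impI)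
    show "bot \<in> I" unfolding I_def using bot by auto
    show "u \<in> I" if "v \<in> I" "u \<le> v" for u v using that order.trans unfolding I_def by blast
    show "sup u v \<in> I" if "u \<in> I" "v \<in> I" for u v
    proof -
      from that obtain w w' where w: "w \<notin> p" "u \<le> sup w y" "w' \<notin> p" "v \<le> sup w' y"
        unfolding I_def by blast
      have "sup w y \<le> sup (sup w w') y" "sup w' y \<le> sup (sup w w') y"
        by (simp_all add: le_supI1 le_supI2)
      then have "sup u v \<le> sup (sup w w') y"
        using w(2,4) by (intro le_supI) (erule order.trans, assumption)+
      moreover have "sup w w' \<notin> p" using w(1,3) prime by blast
      ultimately show ?thesis unfolding I_def by blast
    qed
  qed
  moreover have "{z. x \<le> z} \<inter> I = {}"
  proof (intro Int_emptyI)
    fix z assume "z \<in> {z. x \<le> z}" "z \<in> I"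
    then obtain w where "w \<notin> p" "x \<le> z" "z \<le> sup w y" unfolding I_def by blast
    then have "x \<le> sup y w" by (simp add: sup_commute order.trans)
    then have "x \<le> w" by (rule x(2))
    then show False using up[OF up[OF assms(2) x(1)]] \<open>w \<notin> p\<close> by blast
  qed
  ultimately obtain q where q: "prime_filter q" "{z. x \<le> z} \<subseteq> q" "q \<inter> I = {}"
    using prime_filter_separation[OF lattice_filter_principal] by blast
  have "q \<subseteq> p" using q(3) sup_ge1 unfolding I_def by blast
  moreover have "y \<in> I" unfolding I_def using bot by (intro CollectI exI[of _ bot]) simp
  then have "y \<notin> q" using q(3) by blast
  ultimately show thesis using q(1,2) assms(2) by (intro that) auto
qed

lemma height_ge_of_strong_chain:
  assumes "prime_filter p" and "strong_chain n (x::nat \<Rightarrow> 'a)" and "x n \<in> p"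
  shows "height_ge p n"
  using assms
proof (induction n arbitrary: p)
  case (Suc n)
  have ch: "strong_chain n x" "strong_le (x (Suc n)) (x n)"
    using Suc.prems(2) unfolding strong_chain_Suc_iff_last by blast+
  obtain q where q: "prime_filter q" "q \<subset> p" "x n \<in> q"
    using Suc.prems(1,3) ch(2) by (rule prime_filter_below_strong_le)
  then have "height_ge q n" using Suc.IH ch(1) by blast
  with q show ?case by (auto simp: Spec_def)
qed simp

lemma coheight_ge_of_strong_chain:
  assumes "prime_filter p" and "strong_chain n (x::nat \<Rightarrow> 'a)" and "x n \<in> p"
  shows "\<exists>q. prime_filter q \<and> x 0 \<in> q \<and> coheight_ge q n"
  using assms
proof (induction n arbitrary: x)
  case (Suc n)
  have ch: "strong_le (x 1) (x 0)" "strong_chain n (\<lambda>i. x (Suc i))"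
    using Suc.prems(2) unfolding strong_chain_Suc_iff_shift by blast+
  obtain q' where q': "prime_filter q'" "x 1 \<in> q'" "coheight_ge q' n"
    using Suc.IH[OF Suc.prems(1) ch(2)] Suc.prems(3) by auto
  obtain q where q: "prime_filter q" "q \<subset> q'" "x 0 \<in> q"
    using q'(1,2) ch(1) by (rule prime_filter_below_strong_le)
  have "coheight_ge q (Suc n)" using q(2) q' by (auto simp: Spec_def)
  with q show ?case by blast
qed auto

lemma strong_chain_of_coheight_ge:
  assumes "prime_filter p" and "(z::'a) \<in> p" and "coheight_ge p n"
  shows "\<exists>x. strong_chain n x \<and> x 0 \<le> z \<and> x n \<noteq> bot"
  using assms
proof (induction n arbitrary: p z)
  case 0
  then have "z \<noteq> bot" unfolding prime_filter_def by blast
  then show ?case by (intro exI[of _ "\<lambda>_. z"]) (simp add: strong_chain_def)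
next
  case (Suc n)
  obtain q where q: "prime_filter q" "p \<subset> q" "coheight_ge q n"
    using Suc.prems(3) by (auto simp: Spec_def)
  obtain b where b: "b \<in> q" "b \<notin> p" using q(2) by blast
  have "cdiff z b \<in> p" using Suc.prems(1,2) b(2) by (rule cdiff_mem_prime_filter)
  then have "inf (cdiff z b) b \<in> q" using q(1,2) b(1) unfolding prime_filter_def by blast
  then obtain x where x: "strong_chain n x" "x 0 \<le> inf (cdiff z b) b" "x n \<noteq> bot"
    using Suc.IH q(1,3) by blast
  have "strong_le (x 0) (cdiff z b)"
    using x(2) strong_le_inf_cdiff[OF cdiff_cdiff_same] by (rule le_strong_le_trans)
  then have "strong_chain (Suc n) (case_nat (cdiff z b) x)"
    using x(1) by (simp add: strong_chain_Suc_iff_shift)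
  then show ?case using x(3) cdiff_le by (intro exI[of _ "case_nat (cdiff z b) x"]) simp
qed

text \<open>The invariant \<open>cdiff (x n) b = x n\<close> is what lets the chain be prolonged by one step.\<close>

lemma strong_chain_of_height_ge:
  assumes "prime_filter p" and "height_ge p n" and "(b::'a) \<notin> p"
  shows "\<exists>x. strong_chain n x \<and> x n \<in> p \<and> cdiff (x n) b = x n"
  using assms
proof (induction n arbitrary: p b)
  case 0
  have "top \<in> p" using "0.prems"(1) unfolding prime_filter_def by blast
  then have "cdiff top b \<in> p" using "0.prems"(1,3) cdiff_mem_prime_filter by blast
  then show ?case
    by (intro exI[of _ "\<lambda>_. cdiff top b"]) (simp add: strong_chain_def cdiff_cdiff_same)
next
  case (Suc n)
  obtain q where q: "prime_filter q" "q \<subset> p" "height_ge q n"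
    using Suc.prems(2) by (auto simp: Spec_def)
  obtain b' where b': "b' \<in> p" "b' \<notin> q" using q(2) by blast
  obtain x where x: "strong_chain n x" "x n \<in> q" "cdiff (x n) b' = x n"
    using Suc.IH[OF q(1,3) b'(2)] by blast
  define y where "y = cdiff (inf (x n) b') b"
  have "inf (x n) b' \<in> p" using x(2) q(2) b'(1) Suc.prems(1) unfolding prime_filter_def by blast
  then have "y \<in> p" unfolding y_def using Suc.prems(1,3) cdiff_mem_prime_filter by blast
  have "strong_le y (x n)"
    unfolding y_def using cdiff_le strong_le_inf_cdiff[OF x(3)] by (rule le_strong_le_trans)
  then have "strong_chain (Suc n) (x(Suc n := y))"
    using x(1) by (simp add: strong_chain_Suc_iff_last strong_chain_cong[of n "x(Suc n := y)" x])
  moreover have "cdiff y b = y" unfolding y_def by (rule cdiff_cdiff_same)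
  ultimately show ?case using \<open>y \<in> p\<close> fun_upd_same[of x "Suc n" y] by metis
qed

lemma enat_le_dimL_iff_strong_chain:
  assumes "d > 0"
  shows "enat d \<le> dimL (a::'a) \<longleftrightarrow> (\<exists>x. strong_chain d x \<and> x 0 \<le> a \<and> x d \<noteq> bot)"
proof
  assume "enat d \<le> dimL a"
  then obtain p where "prime_filter p" "a \<in> p" "coheight_ge p d"
    using enat_le_dimL_iff[OF assms] by blast
  then show "\<exists>x. strong_chain d x \<and> x 0 \<le> a \<and> x d \<noteq> bot"
    by (rule strong_chain_of_coheight_ge)
next
  assume "\<exists>x. strong_chain d x \<and> x 0 \<le> a \<and> x d \<noteq> bot"
  then obtain x where x: "strong_chain d x" "x 0 \<le> a" "x d \<noteq> bot" by blast
  obtain p where "prime_filter p" "x d \<in> p" using x(3) by (rule prime_filter_containing)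
  then obtain q where q: "prime_filter q" "x 0 \<in> q" "coheight_ge q d"
    using x(1) coheight_ge_of_strong_chain by blast
  have "a \<in> q" using q(1,2) x(2) unfolding prime_filter_def by blast
  with q show "enat d \<le> dimL a" using enat_le_dimL_iff[OF assms] by blast
qed

lemma enat_le_codimL_iff_strong_chain:
  "enat d \<le> codimL (a::'a) \<longleftrightarrow> (\<exists>x. strong_chain d x \<and> a \<le> x d)"
proof
  assume "\<exists>x. strong_chain d x \<and> a \<le> x d"
  then obtain x where "strong_chain d x" "a \<le> x d" by blast
  then have "height_ge p d" if "prime_filter p" "a \<in> p" for p
    using that height_ge_of_strong_chain unfolding prime_filter_def by blast
  then show "enat d \<le> codimL a" unfolding enat_le_codimL_iff by blast
next
  assume codim: "enat d \<le> codimL a"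
  let ?I = "{c::'a. \<exists>x. strong_chain d x \<and> c \<le> x d}"
  show "\<exists>x. strong_chain d x \<and> a \<le> x d"
  proof (rule ccontr)
    assume "\<not> ?thesis"
    then have "{z. a \<le> z} \<inter> ?I = {}" using order.trans by blast
    then obtain p where p: "prime_filter p" "{z. a \<le> z} \<subseteq> p" "p \<inter> ?I = {}"
      using prime_filter_separation[OF lattice_filter_principal lattice_ideal_strong_chain_ends] by blast
    then have "height_ge p d" using codim unfolding enat_le_codimL_iff by blast
    moreover have "bot \<notin> p" using p(1) unfolding prime_filter_def by blast
    ultimately obtain x where "strong_chain d x" "x d \<in> p"
      using p(1) strong_chain_of_height_ge by blast
    then show False using p(3) by blast
  qed
qed

end

theorem theorem3p8:
  fixes a :: "'a::{bounded_lattice,distrib_lattice}" and d :: nat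
  assumes "coHeyting TYPE('a)" and "d > 0"
  shows "(dimL a \<ge> enat d \<longleftrightarrow>
           (\<exists>x :: nat \<Rightarrow> 'a. x d \<noteq> bot \<and> (\<forall>i<d. strong_le (x (Suc i)) (x i)) \<and> x 0 \<le> a))
       \<and> (codimL a \<ge> enat d \<longleftrightarrow>
           (\<exists>x :: nat \<Rightarrow> 'a. a \<le> x d \<and> (\<forall>i<d. strong_le (x (Suc i)) (x i))))"
  using enat_le_dimL_iff_strong_chain[OF assms] enat_le_codimL_iff_strong_chain[OF assms(1)]
  unfolding strong_chain_def by blast

end
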